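(* Let $T^4=\mathbb{R}^4/\mathbb{Z}^4$, and let $G$ be a constant Riemannian metric and $B$ a constant real 2-form on $T^4$ with all components $G_{IJ},B_{IJ}\in\mathbb{Q}$ (i.e. the $\mathcal N=(1,1)$ SCFT for $(T^4;G,B)$ is rational). Let $I$ be a polarizable constant complex structure on $T^4$ with which $G$ is compatible and such that the Hodge $(2,0)$ component of the class of $B$ (with respect to $I$) vanishes. Then there exists a primitive subgroup $\Gamma_f\subset H_1(T^4;\mathbb{Z})$ of rank $2$ such that the T-dual along $\Gamma_f$ has a geometric SYZ-mirror; that is, $\omega|_{\Gamma_f\otimes\mathbb{R}}=0$ and $B|_{\Gamma_f\otimes\mathbb{R}}=0$.
   Context: Coordinates $X^I$ normalized so that $H_1(T^4;\mathbb{Z})=\mathbb{Z}^4$ and $2\pi\sqrt{\alpha'}=1$; $G=G_{IJ}dX^I\otimes dX^J$, $B=\frac12B_{IJ}dX^I\wedge dX^J$. Compatible: $G(Iu,Iv)=G(u,v)$. Polarizable: some $\psi\in H^2(T^4;\mathbb{Z})\cap H^{1,1}$ has $\psi(I\cdot,\cdot)$ positive definite. Kähler form: $\omega=\frac12\omega_{IJ}dX^I\wedge dX^J$, $\omega_{IJ}=I^K{}_IG_{KJ}$. For a rank-2 primitive $\Gamma_f\subset H_1(T^4;\mathbb{Z})$ (so $H_1(T^4;\mathbb{Z})=\Gamma_f\oplus\Gamma_b$ for some $\Gamma_b$), string-theoretic T-duality along the fibers $\Gamma_f\otimes\mathbb{R}/\Gamma_f$ maps the SCFT with its $\mathcal N=(2,2)$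 structure defined by $I$ to another torus SCFT; one says $(T^4;G,B;I)$ has a geometric SYZ-mirror along $\Gamma_f$ if the mirror $\mathcal N=(2,2)$ currents come from a complex structure on the T-dual torus. By a known result this holds iff $\omega$ and $B$ restrict to zero on $\Gamma_f\otimes\mathbb{R}$ (2-forms evaluated on pairs of vectors in $\Gamma_f\otimes\mathbb{R}$). *)

theory Defs
  imports "HOL-Analysis.Analysis"
begin

text \<open>Constant tensors on T^4 = R^4/Z^4, in the coordinates X^I with H_1(T^4;Z) = Z^4.
  A matrix M :: real^4^4 represents the bilinear form (u,v) |-> u^I M_IJ v^J on tangent
  vectors (elements of real^4 = H_1(T^4;R)).\<close>

definition bilin :: "real^4^4 \<Rightarrow> real^4 \<Rightarrow> real^4 \<Rightarrow> real" where
  "bilin M u v = u \<bullet> (M *v v)"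

definition int_vecs :: "(real^4) set" where
  "int_vecs = {v. \<forall>i. v $ i \<in> \<int>}"

text \<open>Primitive subgroup of rank 2: Gamma_f is spanned over Z by the first two vectors of a
  Z-basis f_1,...,f_4 of Z^4 (integer vectors forming a unimodular matrix), so that
  Z^4 = Gamma_f (+) Gamma_b with Gamma_b spanned by f_3, f_4.\<close>
definition primitive_rank2 :: "(real^4) set \<Rightarrow> bool" where
  "primitive_rank2 \<Gamma> \<longleftrightarrow>
     (\<exists>f :: 4 \<Rightarrow> real^4. (\<forall>i. f i \<in> int_vecs) \<and> \<bar>det (\<chi> i. f i)\<bar> = 1 \<and>
        \<Gamma> = {of_int a *\<^sub>R f 1 + of_int b *\<^sub>R f 2 | a b. True})"

text \<open>Hodge components of a real 2-form beta: beta^{2,0}(u,v) = beta_C(pi^{1,0} u, pi^{1,0} v)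
  with pi^{1,0} = (1 - i I)/2, and beta^{0,2} similarly with pi^{0,1} = (1 + i I)/2,
  where beta_C is the complex-bilinear extension (written out below for real u, v,
  which span the complexification).\<close>
definition hodge20 :: "(real^4 \<Rightarrow> real^4 \<Rightarrow> real) \<Rightarrow> real^4^4 \<Rightarrow> real^4 \<Rightarrow> real^4 \<Rightarrow> complex" where
  "hodge20 \<beta> I u v =
     (complex_of_real (\<beta> u v - \<beta> (I *v u) (I *v v))
      - \<i> * complex_of_real (\<beta> u (I *v v) + \<beta> (I *v u) v)) / 4"

definition hodge02 :: "(real^4 \<Rightarrow> real^4 \<Rightarrow> real) \<Rightarrow> real^4^4 \<Rightarrow> real^4 \<Rightarrow> real^4 \<Rightarrow> complex" where
  "hodge02 \<beta> I u v =
     (complex_of_real (\<beta> u v - \<beta> (I *v u) (I *v v))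
      + \<i> * complex_of_real (\<beta> u (I *v v) + \<beta> (I *v u) v)) / 4"

definition is_11 :: "(real^4 \<Rightarrow> real^4 \<Rightarrow> real) \<Rightarrow> real^4^4 \<Rightarrow> bool" where
  "is_11 \<beta> I \<longleftrightarrow> (\<forall>u v. hodge20 \<beta> I u v = 0 \<and> hodge02 \<beta> I u v = 0)"

definition compatible :: "real^4^4 \<Rightarrow> real^4^4 \<Rightarrow> bool" where
  "compatible G I \<longleftrightarrow> (\<forall>u v. bilin G (I *v u) (I *v v) = bilin G u v)"

text \<open>Polarizable: some integral class psi in H^2(T^4;Z) of type (1,1) with psi(I.,.) positive
  definite.  Integral 2-forms are antisymmetric integer matrices psi_IJ
  (psi = 1/2 psi_IJ dX^I /\ dX^J).\<close>
definition polarizable :: "real^4^4 \<Rightarrow> bool" where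
  "polarizable I \<longleftrightarrow>
     (\<exists>\<psi> :: real^4^4. transpose \<psi> = - \<psi> \<and> (\<forall>i j. \<psi> $ i $ j \<in> \<int>) \<and>
        is_11 (bilin \<psi>) I \<and> (\<forall>u. u \<noteq> 0 \<longrightarrow> bilin \<psi> (I *v u) u > 0))"

text \<open>Kaehler form omega_IJ = I^K_I G_KJ, i.e. omega(u,v) = G(I u, v).\<close>
definition kahler :: "real^4^4 \<Rightarrow> real^4^4 \<Rightarrow> real^4^4" where
  "kahler G I = transpose I ** G"

end

theory Submission
  imports Defs
begin

text \<open>Let \<open>A = G\<^sup>-\<^sup>1\<psi>\<close> and \<open>C = G\<^sup>-\<^sup>1B\<close> be the endomorphisms attached to the polarization and
  to \<open>B\<close>: both are rational, \<open>G\<close>-skew and commute with \<open>I\<close>. In a \<open>G\<close>-orthonormal frame adapted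
  to \<open>I\<close> such endomorphisms form \<open>u(2) = \<real>I \<oplus> su(2)\<close>, elements of \<open>su(2)\<close> square to
  negative scalars, and positivity of \<open>\<psi>(I\<cdot>,\<cdot>)\<close> makes the central part of \<open>A\<close> dominate its
  \<open>su(2)\<close> part. Quaternion identities then put \<open>I\<close> into the real span of two rational
  matrices that also contains \<open>C\<close>: \<open>A\<close> and \<open>A\<^sup>-\<^sup>1\<close> if \<open>C\<close> is central, \<open>C\<close> and \<open>C\<^sup>-\<^sup>1\<close> if \<open>C\<close>
  is invertible with nonzero central part, and otherwise \<open>C\<close> and a combination of \<open>A\<close> with
  the double commutator \<open>[C, [A, C]]\<close>, whose coefficient \<open>|su(2) part of C|\<^sup>2\<close> is rational
  because it is read off from \<open>tr (C\<^sup>2)\<close>. Hence \<open>\<omega> = -GI\<close> and \<open>B = GC\<close> lie in the real span of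
  two rational 2-forms, and any two rational 2-forms on \<open>\<rat>\<^sup>4\<close> share an isotropic rational
  plane through \<open>e\<^sub>1\<close>, whose integral points span a primitive sublattice.\<close>

lemma matrix_eq_4:
  "(A::'a^4^4) = B \<longleftrightarrow>
    A$1$1 = B$1$1 \<and> A$1$2 = B$1$2 \<and> A$1$3 = B$1$3 \<and> A$1$4 = B$1$4 \<and>
    A$2$1 = B$2$1 \<and> A$2$2 = B$2$2 \<and> A$2$3 = B$2$3 \<and> A$2$4 = B$2$4 \<and>
    A$3$1 = B$3$1 \<and> A$3$2 = B$3$2 \<and> A$3$3 = B$3$3 \<and> A$3$4 = B$3$4 \<and>
    A$4$1 = B$4$1 \<and> A$4$2 = B$4$2 \<and> A$4$3 = B$4$3 \<and> A$4$4 = B$4$4"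
  by (simp add: vec_eq_iff forall_4 conj_ac)

lemma matrix_matrix_mult_4:
  "((A::'a::semiring_1^4^4) ** B)$i$j = A$i$1*B$1$j + A$i$2*B$2$j + A$i$3*B$3$j + A$i$4*B$4$j"
  by (simp add: matrix_matrix_mult_def sum_4)

lemma matrix_vector_mult_4:
  "((A::'a::semiring_1^4^4) *v x)$i = A$i$1*x$1 + A$i$2*x$2 + A$i$3*x$3 + A$i$4*x$4"
  by (simp add: matrix_vector_mult_def sum_4)

lemma inner_vec_4: "(x::real^4) \<bullet> y = x$1*y$1 + x$2*y$2 + x$3*y$3 + x$4*y$4"
  by (simp add: inner_vec_def sum_4)

lemma trace_4: "trace (A::'a::semiring_1^4^4) = A$1$1 + A$2$2 + A$3$3 + A$4$4"
  by (simp add: trace_def sum_4)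

lemma vector_4 [simp]:
  "(vector [w,x,y,z] :: 'a::zero^4)$1 = w"
  "(vector [w,x,y,z] :: 'a^4)$2 = x"
  "(vector [w,x,y,z] :: 'a^4)$3 = y"
  "(vector [w,x,y,z] :: 'a^4)$4 = z"
  by (simp_all add: vector_def)

lemma det_4:
  "det (A::'a::comm_ring_1^4^4) =
     A$1$1*A$2$2*A$3$3*A$4$4 - A$1$1*A$2$2*A$3$4*A$4$3 - A$1$1*A$2$3*A$3$2*A$4$4
   + A$1$1*A$2$3*A$3$4*A$4$2 + A$1$1*A$2$4*A$3$2*A$4$3 - A$1$1*A$2$4*A$3$3*A$4$2
   - A$1$2*A$2$1*A$3$3*A$4$4 + A$1$2*A$2$1*A$3$4*A$4$3 + A$1$2*A$2$3*A$3$1*A$4$4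
   - A$1$2*A$2$3*A$3$4*A$4$1 - A$1$2*A$2$4*A$3$1*A$4$3 + A$1$2*A$2$4*A$3$3*A$4$1
   + A$1$3*A$2$1*A$3$2*A$4$4 - A$1$3*A$2$1*A$3$4*A$4$2 - A$1$3*A$2$2*A$3$1*A$4$4
   + A$1$3*A$2$2*A$3$4*A$4$1 + A$1$3*A$2$4*A$3$1*A$4$2 - A$1$3*A$2$4*A$3$2*A$4$1
   - A$1$4*A$2$1*A$3$2*A$4$3 + A$1$4*A$2$1*A$3$3*A$4$2 + A$1$4*A$2$2*A$3$1*A$4$3
   - A$1$4*A$2$2*A$3$3*A$4$1 - A$1$4*A$2$3*A$3$1*A$4$2 + A$1$4*A$2$3*A$3$2*A$4$1"
proof -
  have f234: "finite {2::4, 3, 4}" "1 \<notin> {2::4, 3, 4}" by auto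
  have f34: "finite {3::4, 4}" "2 \<notin> {3::4, 4}" by auto
  have f4: "finite {4::4}" "3 \<notin> {4::4}" by auto
  show ?thesis
    unfolding det_def UNIV_4
    unfolding sum_over_permutations_insert[OF f234]
    unfolding sum_over_permutations_insert[OF f34]
    unfolding sum_over_permutations_insert[OF f4]
    unfolding permutes_sing
    by (simp add: sign_swap_id permutation_swap_id permutation_compose sign_compose sign_id
        swap_id_eq algebra_simps)
qed

lemma span_pairE:
  fixes a b :: "'a::real_vector"
  assumes "u \<in> span {a, b}"
  obtains x y where "u = x *\<^sub>R a + y *\<^sub>R b"
  using assms by (auto simp: span_breakdown_eq span_singleton) (metis add.commute diff_add_cancel)

lemma span_pairI: "x *\<^sub>R a + y *\<^sub>R b \<in> span {a, b}"
  by (intro span_add span_scale span_base) auto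

lemma matrix_add_rdistrib: "((A::'a::semiring_1^'n^'m) + B) ** C = A ** C + B ** C"
  by (simp add: vec_eq_iff matrix_matrix_mult_def sum.distrib algebra_simps)

lemma matrix_diff_ldistrib: "(A::'a::ring_1^'n^'m) ** (B - C) = A ** B - A ** C"
  by (simp add: vec_eq_iff matrix_matrix_mult_def sum_subtractf algebra_simps)

lemma matrix_diff_rdistrib: "((A::'a::ring_1^'n^'m) - B) ** C = A ** C - B ** C"
  by (simp add: vec_eq_iff matrix_matrix_mult_def sum_subtractf algebra_simps)

lemma matrix_mul_uminus_left: "(- (A::'a::ring_1^'n^'m)) ** B = - (A ** B)"
  by (simp add: vec_eq_iff matrix_matrix_mult_def sum_negf)

lemma matrix_mul_uminus_right: "(A::'a::ring_1^'n^'m) ** (- B) = - (A ** B)"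
  by (simp add: vec_eq_iff matrix_matrix_mult_def sum_negf)

lemma matrix_vector_mult_uminus_left: "(- (A::'a::ring_1^'n^'m)) *v x = - (A *v x)"
  by (simp add: vec_eq_iff matrix_vector_mult_def sum_negf)

lemma matrix_scaleR_left: "(k *\<^sub>R (A::real^'n^'m)) ** B = k *\<^sub>R (A ** B)"
  by (simp add: scalar_matrix_assoc)

lemma matrix_scaleR_right: "(A::real^'n^'m) ** (k *\<^sub>R B) = k *\<^sub>R (A ** B)"
  by (simp add: matrix_scalar_ac scalar_matrix_assoc)

lemma matrix_mult_span_pair:
  fixes G :: "real^'n^'m"
  assumes "X \<in> span {R1, R2}"
  shows "G ** X \<in> span {G ** R1, G ** R2}"
  using assms by (elim span_pairE) (simp add: matrix_add_ldistrib matrix_scaleR_right span_pairI)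

lemma transpose_uminus: "transpose (- A) = - transpose A"
  by (simp add: vec_eq_iff transpose_def)

lemma matrix_inv_left: "invertible A \<Longrightarrow> matrix_inv A ** A = mat 1"
  unfolding invertible_def matrix_inv_def by (rule someI2_ex) auto

lemma matrix_inv_right: "invertible A \<Longrightarrow> A ** matrix_inv A = mat 1"
  unfolding invertible_def matrix_inv_def by (rule someI2_ex) auto

lemma matrix_inv_unique:
  fixes A B :: "'a::semiring_1^'n^'n"
  assumes "A ** B = mat 1" and "B ** A = mat 1"
  shows "matrix_inv A = B"
proof -
  have inv: "invertible A" using assms invertible_def by blast
  have "matrix_inv A = matrix_inv A ** (A ** B)" by (simp add: assms(1))
  also have "\<dots> = B" by (simp add: matrix_mul_assoc matrix_inv_left[OF inv])
  finally show ?thesis .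
qed

definition mat_conj :: "real^'n^'n \<Rightarrow> real^'n^'n \<Rightarrow> real^'n^'n" where
  "mat_conj P X = matrix_inv P ** X ** P"

lemma mat_conj_add: "mat_conj P (X + Y) = mat_conj P X + mat_conj P Y"
  by (simp add: mat_conj_def matrix_add_ldistrib matrix_add_rdistrib)

lemma mat_conj_diff: "mat_conj P (X - Y) = mat_conj P X - mat_conj P Y"
  by (simp add: mat_conj_def matrix_diff_ldistrib matrix_diff_rdistrib)

lemma mat_conj_scaleR: "mat_conj P (k *\<^sub>R X) = k *\<^sub>R mat_conj P X"
  by (simp add: mat_conj_def matrix_scaleR_left matrix_scaleR_right)

context
  fixes P :: "real^'n^'n"
  assumes P: "invertible P"
begin

lemma mat_conj_mult: "mat_conj P (X ** Y) = mat_conj P X ** mat_conj P Y"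
  unfolding mat_conj_def
  by (metis (no_types) matrix_inv_right[OF P] matrix_mul_assoc matrix_mul_rid)

lemma mat_conj_inverse: "P ** mat_conj P X ** matrix_inv P = X"
  unfolding mat_conj_def
  by (metis matrix_inv_right[OF P] matrix_mul_assoc matrix_mul_lid matrix_mul_rid)

lemma mat_conj_eq_iff: "mat_conj P X = mat_conj P Y \<longleftrightarrow> X = Y"
  by (metis mat_conj_inverse)

lemma trace_mat_conj: "trace (mat_conj P X) = trace X"
  unfolding mat_conj_def
  by (metis matrix_inv_right[OF P] matrix_mul_assoc matrix_mul_rid trace_mul_sym)

lemma mat_conj_right_inverse:
  assumes "mat_conj P X ** M = mat 1"
  shows "invertible X" and "mat_conj P (matrix_inv X) = M"
proof -
  define Y where "Y = P ** M ** matrix_inv P"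
  have "mat_conj P Y = M"
    unfolding Y_def mat_conj_def
    by (metis matrix_inv_left[OF P] matrix_mul_assoc matrix_mul_lid matrix_mul_rid)
  then have "mat_conj P (X ** Y) = mat 1"
    using assms by (simp add: mat_conj_mult)
  also have "\<dots> = mat_conj P (mat 1)"
    by (simp add: mat_conj_def matrix_inv_left[OF P])
  finally have "mat_conj P (X ** Y) = mat_conj P (mat 1)" .
  then have XY: "X ** Y = mat 1" by (simp add: mat_conj_eq_iff)
  then have YX: "Y ** X = mat 1" using matrix_left_right_inverse by blast
  show "invertible X" using XY YX invertible_def by blast
  show "mat_conj P (matrix_inv X) = M"
    using matrix_inv_unique[OF XY YX] \<open>mat_conj P Y = M\<close> by simp
qed

end

definition rat_matrix :: "real^'n^'m \<Rightarrow> bool" where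
  "rat_matrix M \<longleftrightarrow> (\<forall>i j. M$i$j \<in> \<rat>)"

lemma rat_matrix_mult: "rat_matrix A \<Longrightarrow> rat_matrix B \<Longrightarrow> rat_matrix (A ** B)"
  unfolding rat_matrix_def matrix_matrix_mult_def by (auto intro!: Rats_sum Rats_mult)

lemma rat_matrix_diff: "rat_matrix A \<Longrightarrow> rat_matrix B \<Longrightarrow> rat_matrix (A - B)"
  unfolding rat_matrix_def by simp

lemma rat_matrix_scaleR: "k \<in> \<rat> \<Longrightarrow> rat_matrix A \<Longrightarrow> rat_matrix (k *\<^sub>R A)"
  unfolding rat_matrix_def by simp

lemma trace_rat_matrix: "rat_matrix (A::real^'n^'n) \<Longrightarrow> trace A \<in> \<rat>"
  unfolding rat_matrix_def trace_def by (auto intro!: Rats_sum)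

lemma det_rat_matrix: "rat_matrix (A::real^'n^'n) \<Longrightarrow> det A \<in> \<rat>"
  unfolding rat_matrix_def det_def by (auto intro!: Rats_sum Rats_mult Rats_prod)

lemma rat_matrix_matrix_inv:
  fixes A :: "real^'n^'n"
  assumes rat: "rat_matrix A" and inv: "invertible A"
  shows "rat_matrix (matrix_inv A)"
  unfolding rat_matrix_def
proof (intro allI)
  fix i k
  have d: "det A \<noteq> 0" using inv invertible_det_nz by blast
  let ?b = "axis k 1 :: real^'n"
  have "A *v (matrix_inv A *v ?b) = ?b"
    by (simp add: matrix_vector_mul_assoc matrix_inv_right[OF inv])
  then have "(matrix_inv A *v ?b)$i = det (\<chi> r j. if j = i then ?b$r else A$r$j) / det A"
    using cramer[OF d] by simp
  moreover have "(matrix_inv A *v ?b)$i = matrix_inv A $ i $ k"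
    by (simp add: matrix_vector_mult_basis column_def)
  moreover have "det (\<chi> r j. if j = i then ?b$r else A$r$j) \<in> \<rat>"
    using rat by (intro det_rat_matrix) (simp add: rat_matrix_def axis_def)
  ultimately show "matrix_inv A $ i $ k \<in> \<rat>"
    using det_rat_matrix[OF rat] by simp
qed

lemma field_matrix_nontrivial_kernel:
  fixes A :: "'a::field^'n^'m"
  assumes "CARD('m) < CARD('n)"
  shows "\<exists>x. x \<noteq> 0 \<and> A *v x = 0"
proof (rule ccontr)
  assume "\<nexists>x. x \<noteq> 0 \<and> A *v x = 0"
  then have "inj ((*v) A)"
    using vec.inj_iff_eq_0 by blast
  then have "vec.dim (range ((*v) A)) = CARD('n)"
    using vec.dim_image_eq[of "(*v) A" UNIV] by (simp add: vec_dim_card card_cart_basis)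
  moreover have "vec.dim (range ((*v) A)) \<le> CARD('m)"
    by (rule dim_subset_UNIV_cart_gen)
  ultimately show False using assms by simp
qed

lemma rat_matrix_nontrivial_kernel:
  fixes A :: "real^'n^'m"
  assumes rat: "rat_matrix A" and dims: "CARD('m) < CARD('n)"
  obtains x where "x \<noteq> 0" "\<forall>i. x$i \<in> \<rat>" "A *v x = 0"
proof -
  have "\<forall>i j. \<exists>r. A$i$j = of_rat r"
    using rat unfolding rat_matrix_def by (metis Rats_cases)
  then obtain q where q: "\<And>i j. A$i$j = of_rat (q i j)" by metis
  obtain y :: "rat^'n" where y: "y \<noteq> 0" "(\<chi> i j. q i j) *v y = 0"
    using field_matrix_nontrivial_kernel[OF dims] by blast
  define x where "x = (\<chi> j. (of_rat (y$j) :: real))"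
  have "x \<noteq> 0" using y(1) by (simp add: x_def vec_eq_iff)
  moreover have "\<forall>i. x$i \<in> \<rat>" by (simp add: x_def)
  moreover have "(A *v x)$i = of_rat (((\<chi> i j. q i j) *v y)$i)" for i
    by (simp add: matrix_vector_mult_def x_def q of_rat_sum of_rat_mult)
  then have "A *v x = 0" using y(2) by (simp add: vec_eq_iff)
  ultimately show thesis using that by blast
qed

subsection \<open>The skew commutant of the standard complex structure\<close>

definition std_cplx :: "real^4^4" where
  "std_cplx = (\<chi> i j. if i = 2 \<and> j = 1 then 1 else if i = 1 \<and> j = 2 then -1
                    else if i = 4 \<and> j = 3 then 1 else if i = 3 \<and> j = 4 then -1 else 0)"

text \<open>The skew matrices commuting with \<^const>\<open>std_cplx\<close> form \<open>u(2) = \<real> std_cplx \<oplus> su(2)\<close>: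
  \<open>u2_mat c t p q\<close> is \<open>c std_cplx\<close> plus the \<open>su(2)\<close> element of coordinates \<open>(t, p, q)\<close>, which
  squares to \<open>-(t\<^sup>2 + p\<^sup>2 + q\<^sup>2)\<close>.\<close>

definition u2_mat :: "real \<Rightarrow> real \<Rightarrow> real \<Rightarrow> real \<Rightarrow> real^4^4" where
  "u2_mat c t p q = (\<chi> i j.
     if i = 1 then (if j = 1 then 0 else if j = 2 then -c-t else if j = 3 then -p else -q)
     else if i = 2 then (if j = 1 then c+t else if j = 2 then 0 else if j = 3 then q else -p)
     else if i = 3 then (if j = 1 then p else if j = 2 then -q else if j = 3 then 0 else t-c)
     else (if j = 1 then q else if j = 2 then p else if j = 3 then c-t else 0))"

lemma u2_mat_central: "u2_mat c 0 0 0 = c *\<^sub>R std_cplx"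
  by (simp add: matrix_eq_4 u2_mat_def std_cplx_def)

lemma u2_mat_mult_conjugate:
  "u2_mat c t p q ** u2_mat c (-t) (-p) (-q) = (t\<^sup>2 + p\<^sup>2 + q\<^sup>2 - c\<^sup>2) *\<^sub>R mat 1"
  by (simp add: matrix_eq_4 matrix_matrix_mult_4 u2_mat_def mat_def power2_eq_square
      algebra_simps)

lemma u2_mat_add_conjugate: "u2_mat c t p q + u2_mat c (-t) (-p) (-q) = (2*c) *\<^sub>R std_cplx"
  by (simp add: matrix_eq_4 u2_mat_def std_cplx_def)

lemma trace_u2_mat_square: "trace (u2_mat c t p q ** u2_mat c t p q) = -4 * (c\<^sup>2 + (t\<^sup>2 + p\<^sup>2 + q\<^sup>2))"
  by (simp add: trace_4 matrix_matrix_mult_4 u2_mat_def power2_eq_square) (simp add: algebra_simps)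

text \<open>In \<open>su(2)\<close> the commutator is twice the cross product, so
  \<open>[Y, [X, Y]] = 4 (|Y|\<^sup>2 X - \<langle>X, Y\<rangle> Y)\<close>; only a multiple of \<^const>\<open>std_cplx\<close> survives below.\<close>

lemma u2_mat_double_commutator:
  "u2_mat d r1 r2 r3 ** (u2_mat c t p q ** u2_mat d r1 r2 r3 - u2_mat d r1 r2 r3 ** u2_mat c t p q)
     - (u2_mat c t p q ** u2_mat d r1 r2 r3 - u2_mat d r1 r2 r3 ** u2_mat c t p q) ** u2_mat d r1 r2 r3
     - (4 * (r1\<^sup>2 + r2\<^sup>2 + r3\<^sup>2)) *\<^sub>R u2_mat c t p q + (4 * (t*r1 + p*r2 + q*r3)) *\<^sub>R u2_mat d r1 r2 r3
   = (4 * ((t*r1 + p*r2 + q*r3) * d - (r1\<^sup>2 + r2\<^sup>2 + r3\<^sup>2) * c)) *\<^sub>R std_cplx"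
  by (simp add: matrix_eq_4 matrix_matrix_mult_4 u2_mat_def std_cplx_def power2_eq_square)
     (simp add: algebra_simps)

lemma skew_commuting_std_cplx_u2_mat:
  assumes skew: "transpose X = - X" and comm: "X ** std_cplx = std_cplx ** X"
  shows "X = u2_mat (-(X$1$2 + X$3$4)/2) ((X$3$4 - X$1$2)/2) (-X$1$3) (-X$1$4)"
proof -
  have s: "X$j$i = - X$i$j" for i j
    using arg_cong[OF skew, of "\<lambda>M. M$i$j"] by (simp add: transpose_def)
  have c: "(X ** std_cplx)$i$j = (std_cplx ** X)$i$j" for i j using comm by simp
  note cc = c[unfolded matrix_matrix_mult_4, of 1 1] c[unfolded matrix_matrix_mult_4, of 1 2]
    c[unfolded matrix_matrix_mult_4, of 1 3] c[unfolded matrix_matrix_mult_4, of 1 4]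
    c[unfolded matrix_matrix_mult_4, of 2 3] c[unfolded matrix_matrix_mult_4, of 2 4]
    c[unfolded matrix_matrix_mult_4, of 3 3] c[unfolded matrix_matrix_mult_4, of 3 4]
  have d: "X$i$i = 0" for i using s[of i i] by simp
  show ?thesis
    using cc d s[of 1 2] s[of 1 3] s[of 1 4] s[of 2 3] s[of 2 4] s[of 3 4]
    by (simp add: matrix_eq_4 u2_mat_def std_cplx_def) (simp add: field_simps)
qed

lemma bilin_axis: "bilin M (axis i 1) (axis j 1) = M$i$j"
  by (simp add: bilin_def matrix_vector_mult_basis inner_axis' column_def)

lemma bilin_eqI: "(\<And>u v. bilin M u v = bilin N u v) \<Longrightarrow> M = N"
  by (metis bilin_axis vec_eq_iff)

lemma bilin_matrix_vector_mult: "bilin M (A *v u) (A *v v) = bilin (transpose A ** M ** A) u v"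
  unfolding bilin_def
  by (metis dot_lmul_matrix inner_commute matrix_vector_mul_assoc transpose_matrix_vector)

lemma bilin_transpose: "bilin (transpose M) u v = bilin M v u"
  by (simp add: bilin_def inner_vec_4 matrix_vector_mult_4 transpose_def algebra_simps)

lemma bilin_add_left: "bilin M (u + w) v = bilin M u v + bilin M w v"
  by (simp add: bilin_def inner_add_left)

lemma bilin_add_right: "bilin M u (v + w) = bilin M u v + bilin M u w"
  by (simp add: bilin_def matrix_vector_right_distrib inner_add_right)

lemma bilin_scaleR_left: "bilin M (k *\<^sub>R u) v = k * bilin M u v"
  by (simp add: bilin_def)

lemma bilin_scaleR_right: "bilin M u (k *\<^sub>R v) = k * bilin M u v"
  by (simp add: bilin_def matrix_vector_mult_scaleR)

lemmas bilin_bilinear = bilin_add_left bilin_add_right bilin_scaleR_left bilin_scaleR_right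

lemma skew_bilin_swap: "transpose M = - M \<Longrightarrow> bilin M u v = - bilin M v u"
  using bilin_transpose[of M v u] by (simp add: bilin_def matrix_vector_mult_uminus_left)

lemma bilin_axis_1_skew_part:
  "bilin M (axis 1 1) v - bilin M v (axis 1 1) = (M - transpose M)$1 \<bullet> v"
  by (simp add: bilin_def inner_vec_4 matrix_vector_mult_4 transpose_def axis_def algebra_simps)

lemma skew_bilin_vanishes_on_span_pair:
  assumes skew: "transpose M = - M" and ab: "bilin M a b = 0"
    and u: "u \<in> span {a, b}" and v: "v \<in> span {a, b}"
  shows "bilin M u v = 0"
proof -
  note alt = skew_bilin_swap[OF skew]
  have "bilin M x x = 0" for x using alt[of x x] by simp
  moreover have "bilin M b a = 0" using alt[of b a] ab by simp
  moreover obtain x1 y1 where "u = x1 *\<^sub>R a + y1 *\<^sub>R b" using u by (rule span_pairE)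
  moreover obtain x2 y2 where "v = x2 *\<^sub>R a + y2 *\<^sub>R b" using v by (rule span_pairE)
  ultimately show ?thesis using ab by (simp add: bilin_bilinear)
qed

lemma posdef_invertible:
  assumes pos: "\<forall>u. u \<noteq> 0 \<longrightarrow> bilin G u u > 0"
  shows "invertible G"
proof -
  have "\<forall>x. G *v x = 0 \<longrightarrow> x = 0"
    using pos by (metis bilin_def inner_zero_right less_irrefl)
  then obtain G' where "G' ** G = mat 1" using matrix_left_invertible_ker by blast
  then show ?thesis using invertible_left_inverse by blast
qed

lemma compatible_iff: "compatible G I \<longleftrightarrow> transpose I ** G ** I = G"
  unfolding compatible_def bilin_matrix_vector_mult by (metis bilin_eqI)

lemma hodge20_eq_0_imp_invariant:
  assumes "\<forall>u v. hodge20 (bilin M) I u v = 0"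
  shows "transpose I ** M ** I = M"
proof (rule bilin_eqI)
  fix u v
  have "Re (hodge20 (bilin M) I u v) = (bilin M u v - bilin M (I *v u) (I *v v)) / 4"
    by (simp add: hodge20_def)
  then show "bilin (transpose I ** M ** I) u v = bilin M u v"
    using assms by (simp add: bilin_matrix_vector_mult)
qed

lemma invariant_form_anticommutes:
  fixes I M :: "real^'n^'n"
  assumes inv: "transpose I ** M ** I = M" and cplx: "I ** I = - mat 1"
  shows "transpose I ** M = - (M ** I)"
proof -
  have "M ** I = transpose I ** M ** (I ** I)" using inv by (metis matrix_mul_assoc)
  also have "\<dots> = - (transpose I ** M)" by (simp add: cplx matrix_mul_uminus_right)
  finally show ?thesis by simp
qed

lemma kahler_skew:
  assumes "transpose G = G" and "transpose I ** G = - (G ** I)"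
  shows "transpose (kahler G I) = - kahler G I"
  using assms by (simp add: kahler_def matrix_transpose_mul transpose_uminus)

lemma inverse_metric_form_commutes:
  fixes G I M :: "real^'n^'n"
  assumes G: "invertible G" and GI: "transpose I ** G = - (G ** I)"
    and MI: "transpose I ** M = - (M ** I)"
  shows "(matrix_inv G ** M) ** I = I ** (matrix_inv G ** M)"
proof -
  let ?H = "matrix_inv G"
  have "?H ** transpose I = ?H ** (transpose I ** G) ** ?H"
    by (simp add: matrix_mul_assoc[symmetric] matrix_inv_right[OF G])
  also have "\<dots> = - (I ** ?H)"
    by (simp add: GI matrix_mul_uminus_left matrix_mul_uminus_right matrix_mul_assoc
        matrix_inv_left[OF G])
  finally have HI: "?H ** transpose I = - (I ** ?H)" .
  have "(?H ** M) ** I = ?H ** (M ** I)" by (simp add: matrix_mul_assoc)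
  also have "M ** I = - (transpose I ** M)" using MI by simp
  also have "?H ** (- (transpose I ** M)) = - ((?H ** transpose I) ** M)"
    by (simp add: matrix_mul_uminus_right matrix_mul_assoc)
  also have "\<dots> = I ** (?H ** M)"
    by (simp add: HI matrix_mul_uminus_left matrix_mul_assoc)
  finally show ?thesis .
qed

subsection \<open>A unitary frame adapted to the complex structure\<close>

lemma gram_matrix_4: "((R::real^4^4) ** M ** transpose R)$i$j = bilin M (R$i) (R$j)"
  by (simp add: bilin_def matrix_matrix_mult_4 matrix_vector_mult_4 inner_vec_4 transpose_def
      algebra_simps)

lemma matrix_mult_transpose_component: "(M ** transpose R)$i$j = (M *v R$j)$i"
  by (simp add: matrix_matrix_mult_def matrix_vector_mult_def transpose_def)

lemma cplx_orthonormal_frame: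
  fixes G I :: "real^4^4"
  assumes G_sym: "transpose G = G" and G_pos: "\<forall>u. u \<noteq> 0 \<longrightarrow> bilin G u u > 0"
    and I_cplx: "I ** I = - mat 1" and GI: "transpose I ** G ** I = G"
  obtains P where "transpose P ** G ** P = mat 1" and "I ** P = P ** std_cplx"
proof -
  have sym: "bilin G u v = bilin G v u" for u v
    by (metis G_sym bilin_transpose)
  have gI: "bilin G (I *v u) (I *v v) = bilin G u v" for u v
    by (simp add: bilin_matrix_vector_mult GI)
  have II: "I *v (I *v u) = - u" for u
    by (simp add: matrix_vector_mul_assoc I_cplx matrix_vector_mult_uminus_left)
  have gIl: "bilin G (I *v u) v = - bilin G u (I *v v)" for u v
    using gI[of "I *v u" v] by (simp add: II bilin_def)
  have gII: "bilin G u (I *v u) = 0" for u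
    using gIl[of u u] sym[of u "I *v u"] by simp
  have unit: "bilin G ((1 / sqrt (bilin G u u)) *\<^sub>R u) ((1 / sqrt (bilin G u u)) *\<^sub>R u) = 1"
    if "u \<noteq> 0" for u
  proof -
    have "0 < bilin G u u" using G_pos that by blast
    then show ?thesis by (simp add: bilin_scaleR_left bilin_scaleR_right)
  qed
  define e1 where "e1 = (1 / sqrt (bilin G (axis 1 1) (axis 1 1))) *\<^sub>R (axis 1 1 :: real^4)"
  define e2 where "e2 = I *v e1"
  obtain y :: "real^4" where y: "y \<noteq> 0" "\<And>z. z \<in> span {G *v e1, G *v e2} \<Longrightarrow> orthogonal y z"
  proof -
    have "dim {G *v e1, G *v e2} \<le> card {G *v e1, G *v e2}" by (rule dim_le_card') simp
    also have "\<dots> \<le> 2" by (simp add: card_insert_le_m1)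
    finally have "dim {G *v e1, G *v e2} < DIM(real^4)" by simp
    then show ?thesis using orthogonal_to_subspace_exists that by blast
  qed
  have y_perp: "bilin G e1 y = 0" "bilin G e2 y = 0"
    using y(2)[of "G *v e1"] y(2)[of "G *v e2"] sym[of _ y]
    by (simp_all add: span_base orthogonal_def bilin_def)
  define e3 where "e3 = (1 / sqrt (bilin G y y)) *\<^sub>R y"
  define e4 where "e4 = I *v e3"
  have e11: "bilin G e1 e1 = 1" unfolding e1_def by (rule unit) simp
  have e22: "bilin G e2 e2 = 1" by (simp add: e2_def gI e11)
  have e33: "bilin G e3 e3 = 1" unfolding e3_def by (rule unit) (rule y(1))
  have e44: "bilin G e4 e4 = 1" by (simp add: e4_def gI e33)
  have e12: "bilin G e1 e2 = 0" by (simp add: e2_def gII)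
  have e13: "bilin G e1 e3 = 0" by (simp add: e3_def bilin_scaleR_right y_perp)
  have e23: "bilin G e2 e3 = 0" by (simp add: e3_def bilin_scaleR_right y_perp)
  have e14: "bilin G e1 e4 = 0" using gIl[of e1 e3] e23 by (simp add: e4_def e2_def)
  have e24: "bilin G e2 e4 = 0" by (simp add: e2_def e4_def gI e13)
  have e34: "bilin G e3 e4 = 0" by (simp add: e4_def gII)
  define R :: "real^4^4" where "R = vector [e1, e2, e3, e4]"
  show thesis
  proof
    show "transpose (transpose R) ** G ** transpose R = mat 1"
      using e11 e22 e33 e44 e12 e13 e14 e23 e24 e34
      by (simp add: matrix_eq_4 gram_matrix_4 R_def mat_def sym[of e2 e1] sym[of e3 e1]
          sym[of e4 e1] sym[of e3 e2] sym[of e4 e2] sym[of e4 e3])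
    have "I *v e1 = e2" "I *v e2 = - e1" "I *v e3 = e4" "I *v e4 = - e3"
      by (simp_all add: e2_def e4_def II)
    then show "I ** transpose R = transpose R ** std_cplx"
      unfolding matrix_eq_4 matrix_mult_transpose_component
      by (simp add: R_def matrix_matrix_mult_4 transpose_def std_cplx_def)
  qed
qed

lemma frame_matrix_inv:
  fixes P G :: "real^'n^'n"
  assumes "transpose P ** G ** P = mat 1"
  shows "invertible P" and "matrix_inv P = transpose P ** G"
proof -
  have PQ: "P ** (transpose P ** G) = mat 1"
    using assms matrix_left_right_inverse by blast
  show "invertible P" using PQ assms invertible_def by blast
  show "matrix_inv P = transpose P ** G" using matrix_inv_unique[OF PQ assms] .
qed

context
  fixes G I P :: "real^4^4"
  assumes PGP: "transpose P ** G ** P = mat 1" and IP: "I ** P = P ** std_cplx"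
begin

lemma frame_mat_conj: "mat_conj P X = transpose P ** (G ** X) ** P"
  by (simp add: mat_conj_def frame_matrix_inv(2)[OF PGP] matrix_mul_assoc)

lemma frame_mat_conj_cplx: "mat_conj P I = std_cplx"
  unfolding mat_conj_def
  by (metis IP matrix_inv_left[OF frame_matrix_inv(1)[OF PGP]] matrix_mul_assoc matrix_mul_lid)

lemma frame_mat_conj_u2_mat:
  assumes skew: "transpose (G ** X) = - (G ** X)" and comm: "X ** I = I ** X"
  obtains c t p q where "mat_conj P X = u2_mat c t p q"
proof -
  have "transpose (mat_conj P X) = - mat_conj P X"
    using skew by (simp add: frame_mat_conj matrix_transpose_mul matrix_mul_assoc
        matrix_mul_uminus_left matrix_mul_uminus_right)
  moreover have "mat_conj P X ** std_cplx = std_cplx ** mat_conj P X"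
    using comm mat_conj_mult[OF frame_matrix_inv(1)[OF PGP]] frame_mat_conj_cplx by metis
  ultimately show thesis using skew_commuting_std_cplx_u2_mat that by blast
qed

lemma frame_u2_mat_of_invariant_form:
  assumes G: "invertible G" and GI: "transpose I ** G = - (G ** I)"
    and skew: "transpose M = - M" and MI: "transpose I ** M = - (M ** I)"
  obtains c t p q where "mat_conj P (matrix_inv G ** M) = u2_mat c t p q"
proof -
  have "transpose (G ** (matrix_inv G ** M)) = - (G ** (matrix_inv G ** M))"
    using skew by (simp add: matrix_mul_assoc matrix_inv_right[OF G])
  moreover have "(matrix_inv G ** M) ** I = I ** (matrix_inv G ** M)"
    by (rule inverse_metric_form_commutes[OF G GI MI])
  ultimately show thesis using frame_mat_conj_u2_mat that by blast
qed

end

lemma bilin_u2_mat_std_cplx: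
  "bilin (u2_mat c t p q) (std_cplx *v x) x =
     (c+t) * ((x$1)\<^sup>2 + (x$2)\<^sup>2) + (c-t) * ((x$3)\<^sup>2 + (x$4)\<^sup>2) + 2*q * (x$1*x$3 + x$2*x$4)
     + 2*p * (x$2*x$3 - x$1*x$4)"
  by (simp add: bilin_def inner_vec_4 matrix_vector_mult_4 u2_mat_def std_cplx_def power2_eq_square)
     (simp add: algebra_simps)

lemma u2_mat_positive:
  assumes pos: "\<And>x. x \<noteq> 0 \<Longrightarrow> 0 < bilin (u2_mat c t p q) (std_cplx *v x) x"
  shows "t\<^sup>2 + p\<^sup>2 + q\<^sup>2 < c\<^sup>2"
proof -
  have "vector [1, 0, 0, 0] \<noteq> (0::real^4)" "vector [0, 0, 1, 0] \<noteq> (0::real^4)"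
    by (simp_all add: vec_eq_iff forall_4)
  from pos[OF this(1)] pos[OF this(2)] have ct: "0 < c + t" "0 < c - t"
    by (simp_all add: bilin_u2_mat_std_cplx)
  show ?thesis
  proof (cases "p\<^sup>2 + q\<^sup>2 = 0")
    case True
    then have "p = 0" "q = 0" by (simp_all add: sum_power2_eq_zero_iff)
    moreover have "0 < (c + t) * (c - t)" using ct by simp
    ultimately show ?thesis by (simp add: power2_eq_square algebra_simps)
  next
    case False
    let ?x = "vector [p\<^sup>2 + q\<^sup>2, 0, -q * (c+t), p * (c+t)] :: real^4"
    have "?x \<noteq> 0" using False by (simp add: vec_eq_iff forall_4) blast
    from pos[OF this] have "0 < (p\<^sup>2 + q\<^sup>2) * (c+t) * ((c-t) * (c+t) - (p\<^sup>2 + q\<^sup>2))"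
      by (simp add: bilin_u2_mat_std_cplx power2_eq_square) (simp add: algebra_simps)
    moreover have "0 < p\<^sup>2 + q\<^sup>2"
      using False by (metis add_nonneg_nonneg less_eq_real_def zero_le_power2)
    ultimately have "0 < (c-t) * (c+t) - (p\<^sup>2 + q\<^sup>2)" using ct
      by (metis mult_pos_pos zero_less_mult_pos)
    then show ?thesis by (simp add: power2_eq_square algebra_simps)
  qed
qed

lemma polarization_u2_mat_positive:
  fixes G I P A \<psi> :: "real^4^4"
  assumes PGP: "transpose P ** G ** P = mat 1" and IP: "I ** P = P ** std_cplx"
    and GA: "G ** A = \<psi>" and pos: "\<forall>u. u \<noteq> 0 \<longrightarrow> bilin \<psi> (I *v u) u > 0"
    and u2: "mat_conj P A = u2_mat c t p q"
  shows "t\<^sup>2 + p\<^sup>2 + q\<^sup>2 < c\<^sup>2"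
proof (rule u2_mat_positive)
  fix x :: "real^4"
  assume "x \<noteq> 0"
  moreover have "x = matrix_inv P *v (P *v x)"
    by (simp add: matrix_vector_mul_assoc matrix_inv_left[OF frame_matrix_inv(1)[OF PGP]])
  ultimately have "P *v x \<noteq> 0" by auto
  then have "0 < bilin \<psi> (I *v (P *v x)) (P *v x)" using pos by blast
  also have "\<dots> = bilin \<psi> (P *v (std_cplx *v x)) (P *v x)"
    by (simp add: matrix_vector_mul_assoc IP)
  also have "\<dots> = bilin (mat_conj P A) (std_cplx *v x) x"
    by (simp add: bilin_matrix_vector_mult frame_mat_conj[OF PGP IP] GA)
  finally show "0 < bilin (u2_mat c t p q) (std_cplx *v x) x" by (simp add: u2)
qed

subsection \<open>The complex structure in a rational span\<close>

lemma cplx_in_span_matrix_inv: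
  fixes P I X :: "real^4^4"
  assumes P: "invertible P" and I: "mat_conj P I = std_cplx"
    and X: "mat_conj P X = u2_mat e s1 s2 s3" and e: "e \<noteq> 0"
    and s: "s1\<^sup>2 + s2\<^sup>2 + s3\<^sup>2 \<noteq> e\<^sup>2"
  shows "invertible X" and "I \<in> span {X, matrix_inv X}"
proof -
  define \<kappa> where "\<kappa> = s1\<^sup>2 + s2\<^sup>2 + s3\<^sup>2 - e\<^sup>2"
  have \<kappa>: "\<kappa> \<noteq> 0" using s by (simp add: \<kappa>_def)
  define M where "M = (1 / \<kappa>) *\<^sub>R u2_mat e (-s1) (-s2) (-s3)"
  have "mat_conj P X ** M = mat 1"
    using \<kappa> by (simp add: X M_def matrix_scaleR_right u2_mat_mult_conjugate \<kappa>_def[symmetric])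
  note X_inv = mat_conj_right_inverse[OF P this]
  show "invertible X" by (rule X_inv(1))
  have "mat_conj P (X + \<kappa> *\<^sub>R matrix_inv X) = mat_conj P ((2 * e) *\<^sub>R I)"
    using \<kappa> by (simp add: mat_conj_add mat_conj_scaleR X X_inv(2) I M_def u2_mat_add_conjugate)
  then have X_I: "X + \<kappa> *\<^sub>R matrix_inv X = (2 * e) *\<^sub>R I"
    by (simp add: mat_conj_eq_iff[OF P])
  have "I = (1 / (2 * e)) *\<^sub>R ((2 * e) *\<^sub>R I)" using e by simp
  also have "\<dots> = (1 / (2 * e)) *\<^sub>R X + (\<kappa> / (2 * e)) *\<^sub>R matrix_inv X"
    by (simp add: X_I[symmetric] scaleR_add_right)
  finally show "I \<in> span {X, matrix_inv X}" by (simp add: span_pairI)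
qed

lemma cauchy_schwarz_3_neq:
  fixes c d t p q r1 r2 r3 :: real
  assumes tpq: "t\<^sup>2 + p\<^sup>2 + q\<^sup>2 < c\<^sup>2" and d: "d\<^sup>2 \<le> r1\<^sup>2 + r2\<^sup>2 + r3\<^sup>2"
    and r: "0 < r1\<^sup>2 + r2\<^sup>2 + r3\<^sup>2"
  shows "(t*r1 + p*r2 + q*r3) * d \<noteq> (r1\<^sup>2 + r2\<^sup>2 + r3\<^sup>2) * c"
proof
  let ?\<nu> = "t\<^sup>2 + p\<^sup>2 + q\<^sup>2" and ?\<rho> = "r1\<^sup>2 + r2\<^sup>2 + r3\<^sup>2" and ?\<mu> = "t*r1 + p*r2 + q*r3"
  assume eq: "?\<mu> * d = ?\<rho> * c"
  have "?\<nu> * ?\<rho> - ?\<mu>\<^sup>2 = (t*r2 - p*r1)\<^sup>2 + (t*r3 - q*r1)\<^sup>2 + (p*r3 - q*r2)\<^sup>2"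
    by (simp add: power2_eq_square algebra_simps)
  moreover have "0 \<le> (t*r2 - p*r1)\<^sup>2 + (t*r3 - q*r1)\<^sup>2 + (p*r3 - q*r2)\<^sup>2" by simp
  ultimately have cs: "?\<mu>\<^sup>2 \<le> ?\<nu> * ?\<rho>" by linarith
  have \<nu>: "0 \<le> ?\<nu>" by simp
  have "(?\<mu> * d)\<^sup>2 = ?\<mu>\<^sup>2 * d\<^sup>2" by (simp add: power_mult_distrib)
  also have "\<dots> \<le> (?\<nu> * ?\<rho>) * ?\<rho>" using cs d \<nu> r by (intro mult_mono) auto
  also have "\<dots> < c\<^sup>2 * ?\<rho>\<^sup>2"
  proof -
    have "?\<nu> * ?\<rho>\<^sup>2 < c\<^sup>2 * ?\<rho>\<^sup>2" using tpq r by simp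
    then show ?thesis by (simp add: power2_eq_square algebra_simps)
  qed
  also have "\<dots> = (?\<rho> * c)\<^sup>2" by (simp add: power_mult_distrib mult.commute)
  finally show False using eq by simp
qed

lemma singular_u2_mat_norm_rational:
  fixes P C :: "real^4^4"
  assumes P: "invertible P" and C: "rat_matrix C" "mat_conj P C = u2_mat d r1 r2 r3"
    and singular: "d = 0 \<or> r1\<^sup>2 + r2\<^sup>2 + r3\<^sup>2 = d\<^sup>2"
  shows "r1\<^sup>2 + r2\<^sup>2 + r3\<^sup>2 \<in> \<rat>"
proof -
  have trace: "trace (C ** C) = -4 * (d\<^sup>2 + (r1\<^sup>2 + r2\<^sup>2 + r3\<^sup>2))"
    using trace_mat_conj[OF P, of "C ** C"]
    by (simp add: mat_conj_mult[OF P] C(2) trace_u2_mat_square)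
  have trace_rat: "trace (C ** C) \<in> \<rat>" by (intro trace_rat_matrix rat_matrix_mult C(1))
  from singular show ?thesis
  proof
    assume "d = 0"
    then have "r1\<^sup>2 + r2\<^sup>2 + r3\<^sup>2 = - trace (C ** C) / 4" using trace by simp
    then show ?thesis using trace_rat by simp
  next
    assume "r1\<^sup>2 + r2\<^sup>2 + r3\<^sup>2 = d\<^sup>2"
    then have "r1\<^sup>2 + r2\<^sup>2 + r3\<^sup>2 = - trace (C ** C) / 8" using trace by simp
    then show ?thesis using trace_rat by simp
  qed
qed

lemma cplx_in_span_double_commutator:
  fixes P I A C :: "real^4^4"
  assumes P: "invertible P" and I: "mat_conj P I = std_cplx"
    and A: "rat_matrix A" "mat_conj P A = u2_mat c t p q" and pos: "t\<^sup>2 + p\<^sup>2 + q\<^sup>2 < c\<^sup>2"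
    and C: "rat_matrix C" "mat_conj P C = u2_mat d r1 r2 r3"
    and r: "r1\<^sup>2 + r2\<^sup>2 + r3\<^sup>2 \<noteq> 0" and singular: "d = 0 \<or> r1\<^sup>2 + r2\<^sup>2 + r3\<^sup>2 = d\<^sup>2"
  obtains R where "rat_matrix R" and "I \<in> span {R, C}"
proof -
  define \<rho> where "\<rho> = r1\<^sup>2 + r2\<^sup>2 + r3\<^sup>2"
  define \<mu> where "\<mu> = t*r1 + p*r2 + q*r3"
  have "0 \<le> \<rho>" "\<rho> \<noteq> 0" using r by (simp_all add: \<rho>_def)
  then have \<rho>_pos: "0 < \<rho>" by (simp add: less_le)
  have \<rho>_rat: "\<rho> \<in> \<rat>"
    unfolding \<rho>_def by (rule singular_u2_mat_norm_rational[OF P C singular])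
  define R where "R = C ** (A ** C - C ** A) - (A ** C - C ** A) ** C - (4 * \<rho>) *\<^sub>R A"
  define \<kappa> where "\<kappa> = 4 * (\<mu> * d - \<rho> * c)"
  have "mat_conj P (R + (4 * \<mu>) *\<^sub>R C) = mat_conj P (\<kappa> *\<^sub>R I)"
    unfolding R_def mat_conj_add mat_conj_diff mat_conj_scaleR mat_conj_mult[OF P] A(2) C(2) I
      \<kappa>_def \<rho>_def \<mu>_def
    by (rule u2_mat_double_commutator)
  then have R_C: "R + (4 * \<mu>) *\<^sub>R C = \<kappa> *\<^sub>R I" by (simp add: mat_conj_eq_iff[OF P])
  have "d\<^sup>2 \<le> \<rho>" using singular \<rho>_pos by (auto simp: \<rho>_def)
  then have \<kappa>: "\<kappa> \<noteq> 0"
    using cauchy_schwarz_3_neq[OF pos, of d r1 r2 r3] \<rho>_pos by (simp add: \<kappa>_def \<mu>_def \<rho>_def)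
  have "I = (1 / \<kappa>) *\<^sub>R (\<kappa> *\<^sub>R I)" using \<kappa> by simp
  also have "\<dots> = (1 / \<kappa>) *\<^sub>R R + (4 * \<mu> / \<kappa>) *\<^sub>R C"
    by (simp add: R_C[symmetric] scaleR_add_right)
  finally have "I \<in> span {R, C}" by (simp add: span_pairI)
  moreover have "rat_matrix R"
    unfolding R_def using A(1) C(1) \<rho>_rat
    by (intro rat_matrix_diff rat_matrix_mult rat_matrix_scaleR) auto
  ultimately show thesis using that by blast
qed

lemma cplx_and_form_in_rational_span:
  fixes P I A C :: "real^4^4"
  assumes P: "invertible P" and I: "mat_conj P I = std_cplx"
    and A: "rat_matrix A" "mat_conj P A = u2_mat c t p q" and pos: "t\<^sup>2 + p\<^sup>2 + q\<^sup>2 < c\<^sup>2"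
    and C: "rat_matrix C" "mat_conj P C = u2_mat d r1 r2 r3"
  obtains R1 R2 where "rat_matrix R1" "rat_matrix R2" "I \<in> span {R1, R2}" "C \<in> span {R1, R2}"
proof -
  consider (central) "r1\<^sup>2 + r2\<^sup>2 + r3\<^sup>2 = 0"
    | (invertible) "d \<noteq> 0" "r1\<^sup>2 + r2\<^sup>2 + r3\<^sup>2 \<noteq> d\<^sup>2"
    | (singular) "r1\<^sup>2 + r2\<^sup>2 + r3\<^sup>2 \<noteq> 0" "d = 0 \<or> r1\<^sup>2 + r2\<^sup>2 + r3\<^sup>2 = d\<^sup>2"
    by blast
  then show thesis
  proof cases
    case central
    then have "r1 = 0" "r2 = 0" "r3 = 0" by (simp_all add: add_nonneg_eq_0_iff)
    then have "mat_conj P C = mat_conj P (d *\<^sub>R I)"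
      by (simp add: C(2) I mat_conj_scaleR u2_mat_central)
    then have C_I: "C = d *\<^sub>R I" by (simp add: mat_conj_eq_iff[OF P])
    have "0 \<le> t\<^sup>2 + p\<^sup>2 + q\<^sup>2" by simp
    then have "0 < c\<^sup>2" using pos by linarith
    then have "c \<noteq> 0" "t\<^sup>2 + p\<^sup>2 + q\<^sup>2 \<noteq> c\<^sup>2" using pos by auto
    note A_inv = cplx_in_span_matrix_inv[OF P I A(2) this]
    show thesis
    proof (rule that)
      show "rat_matrix A" "rat_matrix (matrix_inv A)"
        using A(1) A_inv(1) rat_matrix_matrix_inv by auto
      show "I \<in> span {A, matrix_inv A}" by (rule A_inv(2))
      then show "C \<in> span {A, matrix_inv A}" by (simp add: C_I span_scale)
    qed
  next
    case invertible
    note C_inv = cplx_in_span_matrix_inv[OF P I C(2) invertible]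
    show thesis
    proof (rule that)
      show "rat_matrix C" "rat_matrix (matrix_inv C)"
        using C(1) C_inv(1) rat_matrix_matrix_inv by auto
      show "I \<in> span {C, matrix_inv C}" by (rule C_inv(2))
      show "C \<in> span {C, matrix_inv C}" by (simp add: span_base)
    qed
  next
    case singular
    obtain R where "rat_matrix R" "I \<in> span {R, C}"
      using cplx_in_span_double_commutator[OF P I A pos C singular] by blast
    then show thesis using that C(1) span_base[of C "{R, C}"] by blast
  qed
qed

lemma kahler_and_form_in_rational_span:
  fixes G B I :: "real^4^4"
  assumes G_sym: "transpose G = G"
    and G_pos: "\<forall>u. u \<noteq> 0 \<longrightarrow> bilin G u u > 0"
    and B_anti: "transpose B = - B"
    and G_rat: "\<forall>i j. G $ i $ j \<in> \<rat>"
    and B_rat: "\<forall>i j. B $ i $ j \<in> \<rat>"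
    and I_cplx: "I ** I = - mat 1"
    and I_compat: "compatible G I"
    and I_pol: "polarizable I"
    and B_20: "\<forall>u v. hodge20 (bilin B) I u v = 0"
  obtains \<alpha> \<beta> where "rat_matrix \<alpha>" "rat_matrix \<beta>"
    and "kahler G I \<in> span {\<alpha>, \<beta>}" and "B \<in> span {\<alpha>, \<beta>}"
proof -
  obtain \<psi> where \<psi>_anti: "transpose \<psi> = - \<psi>" and \<psi>_int: "\<forall>i j. \<psi> $ i $ j \<in> \<int>"
    and \<psi>_11: "is_11 (bilin \<psi>) I" and \<psi>_pos: "\<forall>u. u \<noteq> 0 \<longrightarrow> bilin \<psi> (I *v u) u > 0"
    using I_pol unfolding polarizable_def by blast
  have "\<forall>u v. hodge20 (bilin \<psi>) I u v = 0" using \<psi>_11 by (simp add: is_11_def)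
  note \<psi>I = invariant_form_anticommutes[OF hodge20_eq_0_imp_invariant[OF this] I_cplx]
  note BI = invariant_form_anticommutes[OF hodge20_eq_0_imp_invariant[OF B_20] I_cplx]
  note GI = invariant_form_anticommutes[OF I_compat[unfolded compatible_iff] I_cplx]
  have G: "invertible G" by (rule posdef_invertible[OF G_pos])
  have G_rat': "rat_matrix G" and B_rat': "rat_matrix B" and \<psi>_rat: "rat_matrix \<psi>"
    using G_rat B_rat \<psi>_int Ints_subset_Rats by (auto simp: rat_matrix_def)
  define A where "A = matrix_inv G ** \<psi>"
  define C where "C = matrix_inv G ** B"
  have A_rat: "rat_matrix A" and C_rat: "rat_matrix C"
    unfolding A_def C_def using rat_matrix_matrix_inv[OF G_rat' G] B_rat' \<psi>_rat
    by (simp_all add: rat_matrix_mult)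
  have GA: "G ** A = \<psi>" and GC: "G ** C = B"
    by (simp_all add: A_def C_def matrix_mul_assoc matrix_inv_right[OF G])
  obtain P where PGP: "transpose P ** G ** P = mat 1" and IP: "I ** P = P ** std_cplx"
    using cplx_orthonormal_frame[OF G_sym G_pos I_cplx I_compat[unfolded compatible_iff]] .
  have P: "invertible P" by (rule frame_matrix_inv(1)[OF PGP])
  obtain c t p q where A_u2: "mat_conj P A = u2_mat c t p q"
    unfolding A_def by (rule frame_u2_mat_of_invariant_form[OF PGP IP G GI \<psi>_anti \<psi>I])
  obtain d r1 r2 r3 where C_u2: "mat_conj P C = u2_mat d r1 r2 r3"
    unfolding C_def by (rule frame_u2_mat_of_invariant_form[OF PGP IP G GI B_anti BI])
  have pos: "t\<^sup>2 + p\<^sup>2 + q\<^sup>2 < c\<^sup>2"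
    by (rule polarization_u2_mat_positive[OF PGP IP GA \<psi>_pos A_u2])
  obtain R1 R2 where R: "rat_matrix R1" "rat_matrix R2" "I \<in> span {R1, R2}" "C \<in> span {R1, R2}"
    by (rule cplx_and_form_in_rational_span[OF P frame_mat_conj_cplx[OF PGP IP] A_rat A_u2 pos
        C_rat C_u2])
  show thesis
  proof (rule that)
    show "rat_matrix (G ** R1)" "rat_matrix (G ** R2)" using G_rat' R(1,2) by (simp_all add: rat_matrix_mult)
    have "kahler G I = - (G ** I)" by (simp add: kahler_def GI)
    then show "kahler G I \<in> span {G ** R1, G ** R2}"
      using span_neg[OF matrix_mult_span_pair[OF R(3)]] by simp
    show "B \<in> span {G ** R1, G ** R2}" using matrix_mult_span_pair[OF R(4), of G] GC by simp
  qed
qed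

subsection \<open>A common isotropic primitive sublattice\<close>

lemma rational_primitive_multiple:
  fixes w1 w2 w3 :: real
  assumes rat: "w1 \<in> \<rat>" "w2 \<in> \<rat>" "w3 \<in> \<rat>" and nz: "w1 \<noteq> 0 \<or> w2 \<noteq> 0 \<or> w3 \<noteq> 0"
  obtains l :: real and k1 k2 k3 :: int
  where "l \<noteq> 0" "gcd (gcd k1 k2) k3 = 1" "w1 = l * k1" "w2 = l * k2" "w3 = l * k3"
proof -
  obtain n1 m1 where m1: "m1 > 0" "w1 = of_int n1 / of_int m1" using rat(1) Rats_cases' by blast
  obtain n2 m2 where m2: "m2 > 0" "w2 = of_int n2 / of_int m2" using rat(2) Rats_cases' by blast
  obtain n3 m3 where m3: "m3 > 0" "w3 = of_int n3 / of_int m3" using rat(3) Rats_cases' by blast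
  define D where "D = m1 * m2 * m3"
  define z1 where "z1 = n1 * m2 * m3"
  define z2 where "z2 = n2 * m1 * m3"
  define z3 where "z3 = n3 * m1 * m2"
  have w: "w1 = of_int z1 / of_int D" "w2 = of_int z2 / of_int D" "w3 = of_int z3 / of_int D"
    using m1 m2 m3 by (simp_all add: z1_def z2_def z3_def D_def)
  define g where "g = gcd (gcd z1 z2) z3"
  have "g \<noteq> 0" using nz w by (auto simp: g_def)
  then have g: "g > 0" by (simp add: g_def order_le_less)
  obtain k1 k2 k3 where k: "z1 = g * k1" "z2 = g * k2" "z3 = g * k3"
    unfolding g_def by (meson dvd_def dvd_trans gcd_dvd1 gcd_dvd2)
  have "g * gcd (gcd k1 k2) k3 = gcd (gcd (g * k1) (g * k2)) (g * k3)"
    using g by (simp add: gcd_mult_distrib_int[symmetric] abs_of_pos)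
  also have "\<dots> = gcd (gcd z1 z2) z3" by (simp only: k)
  also have "\<dots> = g" by (simp add: g_def)
  finally have prim: "gcd (gcd k1 k2) k3 = 1" using g by simp
  have "of_int g / of_int D \<noteq> (0::real)" using g m1 m2 m3 by (simp add: D_def)
  from that[OF this prim] show thesis by (simp add: w k)
qed

lemma primitive_triple_unimodular_completion:
  fixes k1 k2 k3 :: int
  assumes prim: "gcd (gcd k1 k2) k3 = 1"
  obtains s1 s2 s3 t1 t2 t3 :: int
  where "k1 * (s2*t3 - s3*t2) - k2 * (s1*t3 - s3*t1) + k3 * (s1*t2 - s2*t1) = 1"
proof (cases "k1 = 0 \<and> k2 = 0")
  case True
  then have "\<bar>k3\<bar> = 1" using prim by simp
  then have "k3 * k3 = 1" using abs_mult_self_eq[of k3] by simp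
  then have "k1 * (0 * 0 - 0 * k3) - k2 * (1 * 0 - 0 * 0) + k3 * (1 * k3 - 0 * 0) = 1"
    using True by simp
  then show thesis by (rule that)
next
  case False
  define g where "g = gcd k1 k2"
  have "g \<noteq> 0" using False by (simp add: g_def)
  then obtain a b where ab: "k1 = a * g" "k2 = b * g" "coprime a b"
    using gcd_coprime_exists[of k1 k2] unfolding g_def by blast
  obtain x y where xy: "x * a + y * b = 1"
    using bezout_int[of a b] ab(3) by (auto simp: coprime_iff_gcd_eq_1)
  obtain u v where uv: "u * g + v * k3 = 1"
    using bezout_int[of g k3] prim by (auto simp: g_def)
  have "k1 * (x * u - 0 * (- v * b)) - k2 * (- y * u - 0 * (- v * a))
      + k3 * (- y * (- v * b) - x * (- v * a)) = u * g * (x * a + y * b) + v * k3 * (x * a + y * b)"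
    by (simp add: ab(1,2) algebra_simps)
  also have "\<dots> = 1" using xy uv by simp
  finally show thesis by (rule that)
qed

lemma rational_forms_common_isotropic_plane:
  fixes \<alpha> \<beta> :: "real^4^4"
  assumes \<alpha>: "rat_matrix \<alpha>" and \<beta>: "rat_matrix \<beta>"
  obtains \<Gamma> where "primitive_rank2 \<Gamma>"
    and "\<And>M u v. M \<in> span {\<alpha>, \<beta>} \<Longrightarrow> transpose M = - M \<Longrightarrow> u \<in> span \<Gamma> \<Longrightarrow> v \<in> span \<Gamma> \<Longrightarrow>
           bilin M u v = 0"
proof -
  define skew1 :: "real^4^4 \<Rightarrow> real^4" where "skew1 M = (M - transpose M) $ 1" for M
  define \<Lambda> :: "real^4^3" where "\<Lambda> = vector [axis 1 1, skew1 \<alpha>, skew1 \<beta>]"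
  have "rat_matrix \<Lambda>"
    using \<alpha> \<beta> by (simp add: rat_matrix_def forall_3 \<Lambda>_def skew1_def transpose_def axis_def)
  then obtain x where x: "x \<noteq> 0" "\<forall>i. x$i \<in> \<rat>" "\<Lambda> *v x = 0"
    by (rule rat_matrix_nontrivial_kernel) simp
  have "\<Lambda>$i \<bullet> x = 0" for i using x(3) matrix_vector_mul_component[of \<Lambda> x i] by simp
  from this[of 1] this[of 2] this[of 3]
  have x1: "x$1 = 0" and x\<alpha>: "skew1 \<alpha> \<bullet> x = 0" and x\<beta>: "skew1 \<beta> \<bullet> x = 0"
    by (simp_all add: \<Lambda>_def inner_axis')
  have "x$2 \<noteq> 0 \<or> x$3 \<noteq> 0 \<or> x$4 \<noteq> 0" using x(1) x1 by (auto simp: vec_eq_iff forall_4)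
  then obtain l k2 k3 k4 where l: "l \<noteq> 0" "gcd (gcd k2 k3) k4 = 1"
      "x$2 = l * k2" "x$3 = l * k3" "x$4 = l * k4"
    using rational_primitive_multiple[of "x$2" "x$3" "x$4"] x(2) by blast
  obtain s2 s3 s4 t2 t3 t4 where st:
    "k2 * (s3*t4 - s4*t3) - k3 * (s2*t4 - s4*t2) + k4 * (s2*t3 - s3*t2) = 1"
    by (rule primitive_triple_unimodular_completion[OF l(2)])
  define f :: "4 \<Rightarrow> real^4" where
    "f i = (if i = 1 then axis 1 1
            else if i = 2 then vector [0, of_int k2, of_int k3, of_int k4]
            else if i = 3 then vector [0, of_int s2, of_int s3, of_int s4]
            else vector [0, of_int t2, of_int t3, of_int t4])" for i
  define \<Gamma> where "\<Gamma> = {of_int a *\<^sub>R f 1 + of_int b *\<^sub>R f 2 | a b. True}"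
  have prim: "primitive_rank2 \<Gamma>"
    unfolding primitive_rank2_def
  proof (intro exI[of _ f] conjI)
    show "\<forall>i. f i \<in> int_vecs" by (simp add: int_vecs_def f_def forall_4 axis_def)
    have "det (\<chi> i. f i) = of_int (k2 * (s3*t4 - s4*t3) - k3 * (s2*t4 - s4*t2) + k4 * (s2*t3 - s3*t2))"
      by (simp add: det_4 f_def axis_def) (simp add: algebra_simps)
    then show "\<bar>det (\<chi> i. f i)\<bar> = 1" using st by simp
  qed (simp add: \<Gamma>_def)
  have f12: "bilin M (f 1) (f 2) = 0"
    if M_span: "M \<in> span {\<alpha>, \<beta>}" and M_skew: "transpose M = - M" for M
  proof -
    obtain a b where M: "M = a *\<^sub>R \<alpha> + b *\<^sub>R \<beta>" using M_span by (rule span_pairE)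
    have "skew1 M = a *\<^sub>R skew1 \<alpha> + b *\<^sub>R skew1 \<beta>"
      by (simp add: M skew1_def transpose_def vec_eq_iff algebra_simps)
    then have "skew1 M \<bullet> x = 0" using x\<alpha> x\<beta> by (simp add: inner_add_left)
    moreover have "x = l *\<^sub>R f 2" using x1 l(3-5) by (simp add: vec_eq_iff forall_4 f_def)
    ultimately have "skew1 M \<bullet> f 2 = 0" using l(1) by simp
    then show ?thesis
      using bilin_axis_1_skew_part[of M "f 2"] skew_bilin_swap[OF M_skew, of "f 2" "f 1"]
      by (simp add: skew1_def f_def)
  qed
  have span_\<Gamma>: "span \<Gamma> \<subseteq> span {f 1, f 2}"
    unfolding \<Gamma>_def by (intro span_minimal subspace_span) (auto intro: span_pairI)
  show thesis
  proof (rule that[OF prim])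
    fix M u v
    assume "M \<in> span {\<alpha>, \<beta>}" "transpose M = - M" "u \<in> span \<Gamma>" "v \<in> span \<Gamma>"
    then show "bilin M u v = 0"
      using skew_bilin_vanishes_on_span_pair f12 span_\<Gamma> by blast
  qed
qed

theorem theorem4p6:
  fixes G B I :: "real^4^4"
  assumes G_sym: "transpose G = G"
    and G_pos: "\<forall>u. u \<noteq> 0 \<longrightarrow> bilin G u u > 0"
    and B_anti: "transpose B = - B"
    and G_rat: "\<forall>i j. G $ i $ j \<in> \<rat>"
    and B_rat: "\<forall>i j. B $ i $ j \<in> \<rat>"
    and I_cplx: "I ** I = - mat 1"
    and I_compat: "compatible G I"
    and I_pol: "polarizable I"
    and B_20: "\<forall>u v. hodge20 (bilin B) I u v = 0"
  shows "\<exists>\<Gamma>f. primitive_rank2 \<Gamma>f \<and>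
           (\<forall>u \<in> span \<Gamma>f. \<forall>v \<in> span \<Gamma>f. bilin (kahler G I) u v = 0 \<and> bilin B u v = 0)"
proof -
  obtain \<alpha> \<beta> where rat: "rat_matrix \<alpha>" "rat_matrix \<beta>"
    and \<omega>: "kahler G I \<in> span {\<alpha>, \<beta>}" and B: "B \<in> span {\<alpha>, \<beta>}"
    by (rule kahler_and_form_in_rational_span[OF G_sym G_pos B_anti G_rat B_rat I_cplx I_compat
          I_pol B_20])
  obtain \<Gamma> where "primitive_rank2 \<Gamma>"
    and iso: "\<And>M u v. M \<in> span {\<alpha>, \<beta>} \<Longrightarrow> transpose M = - M \<Longrightarrow> u \<in> span \<Gamma> \<Longrightarrow>
                 v \<in> span \<Gamma> \<Longrightarrow> bilin M u v = 0"
    using rational_forms_common_isotropic_plane[OF rat] by blast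
  moreover have "transpose (kahler G I) = - kahler G I"
    using kahler_skew[OF G_sym invariant_form_anticommutes[OF I_compat[unfolded compatible_iff] I_cplx]] .
  ultimately show ?thesis using iso[OF \<omega>] iso[OF B B_anti] by blast
qed

end
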